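(* Let $(X,T)$ be random variables with $X$ taking values in a countable set $\mathcal{X}$ and $T\in\{0,1\}$, with joint distribution $P$. Let $Q(T=1\mid X)$ be a propensity score model, i.e. a function $x\mapsto Q(T=1\mid X=x)\in(0,1)$. Suppose $Q$ is not calibrated, in the sense that there exists $q'\in(0,1)$ with $P\big(Q(T=1\mid X)=q'\big)>0$ and $P\big(T=1 \mid Q(T=1\mid X)=q'\big)\neq q'$. Then there exists an outcome function $g:\mathcal{X}\times\{0,1\}\to\mathbb{R}$ such that, if the outcome is $Y=g(X,T)$ (so that the potential outcomes are $Y(t)=g(X,t)$ and the true average treatment effect is $\tau=\mathbb{E}[g(X,1)-g(X,0)]$), the IPTW estimator computed from $n$ i.i.d. samples $(X^{(i)},T^{(i)},Y^{(i)})$, $$\hat\tau_n=\frac1n\sum_{i=1}^n\left(\frac{T^{(i)}Y^{(i)}}{Q(T=1\mid X^{(i)})}-\frac{(1-T^{(i)})Y^{(i)}}{1-Q(T=1\mid X^{(i)})}\right),$$ satisfies $\lim_{n\to\infty}\Pr(\hat\tau_n=\tau)=0$.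
   Context: Setting: observational data of i.i.d. units with features $X$, binary treatment $T$ and scalar outcome $Y$. A propensity score model $Q(T=1\mid X)$ is calibrated if $P(T=1\mid Q(T=1\mid X)=q)=q$ for all $q$; the IPTW (inverse probability of treatment weighting) estimator is as displayed in the claim. *)

theory Defs
  imports "HOL-Probability.Probability"
begin

definition iptw :: "('a \<Rightarrow> real) \<Rightarrow> ('a \<Rightarrow> bool \<Rightarrow> real) \<Rightarrow> nat \<Rightarrow> (nat \<Rightarrow> 'a \<times> bool) \<Rightarrow> real" where
  "iptw Q g n s = (1 / real n) * (\<Sum>i<n.
      (of_bool (snd (s i)) * g (fst (s i)) (snd (s i))) / Q (fst (s i))
      - ((1 - of_bool (snd (s i))) * g (fst (s i)) (snd (s i))) / (1 - Q (fst (s i))))"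

definition ate :: "('a \<times> bool) pmf \<Rightarrow> ('a \<Rightarrow> bool \<Rightarrow> real) \<Rightarrow> real" where
  "ate P g = measure_pmf.expectation P (\<lambda>(x, t). g x True - g x False)"

end

theory Submission
  imports Defs
begin

text \<open>
  Take the outcome that equals \<open>q'\<close> exactly on the treated units with \<open>Q(T=1|X) = q'\<close> and
  vanishes elsewhere. Every IPTW summand is then the indicator of the event
  \<open>Q(T=1|X) = q' \<and> T\<close>, so the estimator is the empirical frequency of that event, whose
  probability is \<open>P(Q = q', T)\<close>. The true effect, however, is \<open>q' P(Q = q')\<close>, which differs
  from it precisely because \<open>Q\<close> is miscalibrated at \<open>q'\<close>. By Hoeffding's inequality the
  empirical frequency hits a value other than its mean with exponentially small probability.
\<close>

lemma map_pmf_eq_bernoulli_pmf: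
  "map_pmf E P = bernoulli_pmf (measure_pmf.prob P {z. E z})"
proof (rule pmf_eqI)
  fix b
  have prob_compl: "measure_pmf.prob P {z. \<not> E z} = 1 - measure_pmf.prob P {z. E z}"
    using measure_pmf.prob_compl[of "{z. E z}" P]
    by (simp add: Compl_eq_Diff_UNIV[symmetric] Collect_neg_eq)
  show "pmf (map_pmf E P) b = pmf (bernoulli_pmf (measure_pmf.prob P {z. E z})) b"
    using prob_compl by (cases b) (simp_all add: pmf_map vimage_def)
qed

lemma map_pmf_card_Pi_pmf_eq_binomial_pmf:
  "map_pmf (\<lambda>s. card {i\<in>{..<n}. E (s i)}) (Pi_pmf {..<n} d (\<lambda>_. P))
     = binomial_pmf n (measure_pmf.prob P {z. E z})"
proof -
  let ?p = "measure_pmf.prob P {z. E z}"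
  have "binomial_pmf n ?p
      = map_pmf (\<lambda>f. card {i\<in>{..<n}. f i}) (Pi_pmf {..<n} (E d) (\<lambda>_. bernoulli_pmf ?p))"
    by (rule binomial_pmf_altdef') auto
  also have "Pi_pmf {..<n} (E d) (\<lambda>_. bernoulli_pmf ?p) = Pi_pmf {..<n} (E d) (\<lambda>_. map_pmf E P)"
    by (simp add: map_pmf_eq_bernoulli_pmf)
  also have "\<dots> = map_pmf (\<lambda>s. E \<circ> s) (Pi_pmf {..<n} d (\<lambda>_. P))"
    by (rule Pi_pmf_map) auto
  finally show ?thesis
    by (simp add: pmf.map_comp o_def)
qed

lemma binomial_pmf_frequency_eq_tendsto_0:
  assumes p: "p \<in> {0..1}" and c: "c \<noteq> p"
  shows "(\<lambda>n. measure_pmf.prob (binomial_pmf n p) {k. real k / real n = c}) \<longlonglongrightarrow> 0"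
proof (rule tendsto_sandwich[OF _ _ tendsto_const])
  define \<epsilon> where "\<epsilon> = \<bar>c - p\<bar>"
  have \<epsilon>: "\<epsilon> > 0"
    using c by (simp add: \<epsilon>_def)
  have bound: "measure_pmf.prob (binomial_pmf n p) {k. real k / real n = c}
      \<le> 2 * exp (-2 * real n * \<epsilon>\<^sup>2)" if "n > 0" for n
  proof -
    interpret binomial_distribution n p
      using p by unfold_locales
    have "measure_pmf.prob (binomial_pmf n p) {k. real k / real n = c}
        \<le> measure_pmf.prob (binomial_pmf n p) {k. \<bar>real k / real n - p\<bar> \<ge> \<epsilon>}"
      by (rule measure_pmf.finite_measure_mono) (auto simp: \<epsilon>_def)
    also have "\<dots> \<le> 2 * exp (-2 * real n * \<epsilon>\<^sup>2)"
      using prob_abs_ge'[OF \<open>n > 0\<close>, of \<epsilon>] \<epsilon> by (simp add: mult_ac)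
    finally show ?thesis .
  qed
  show "\<forall>\<^sub>F n in sequentially.
      measure_pmf.prob (binomial_pmf n p) {k. real k / real n = c} \<le> 2 * exp (-2 * real n * \<epsilon>\<^sup>2)"
    using eventually_gt_at_top[of 0] by eventually_elim (rule bound)
  show "(\<lambda>n. 2 * exp (-2 * real n * \<epsilon>\<^sup>2)) \<longlonglongrightarrow> 0"
    using \<epsilon> by real_asymp
qed simp

lemma empirical_frequency_eq_tendsto_0:
  assumes "c \<noteq> measure_pmf.prob P {z. E z}"
  shows "(\<lambda>n. measure_pmf.prob (Pi_pmf {..<n} d (\<lambda>_. P))
            {s. real (card {i\<in>{..<n}. E (s i)}) / real n = c}) \<longlonglongrightarrow> 0"
proof -
  have "measure_pmf.prob (Pi_pmf {..<n} d (\<lambda>_. P)) {s. real (card {i\<in>{..<n}. E (s i)}) / real n = c}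
      = measure_pmf.prob (binomial_pmf n (measure_pmf.prob P {z. E z})) {k. real k / real n = c}" for n
    unfolding map_pmf_card_Pi_pmf_eq_binomial_pmf[where d = d, symmetric] measure_map_pmf
    by (simp add: vimage_def)
  then show ?thesis
    using binomial_pmf_frequency_eq_tendsto_0[OF _ assms] by simp
qed

definition miscalibration_outcome :: "('a \<Rightarrow> real) \<Rightarrow> real \<Rightarrow> 'a \<Rightarrow> bool \<Rightarrow> real" where
  "miscalibration_outcome Q q x t = (if Q x = q \<and> t then q else 0)"

lemma iptw_miscalibration_outcome:
  assumes "q \<noteq> 0"
  shows "iptw Q (miscalibration_outcome Q q) n s
       = real (card {i\<in>{..<n}. Q (fst (s i)) = q \<and> snd (s i)}) / real n"
proof -
  have "(\<Sum>i<n. of_bool (snd (s i)) * miscalibration_outcome Q q (fst (s i)) (snd (s i)) / Q (fst (s i))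
          - (1 - of_bool (snd (s i))) * miscalibration_outcome Q q (fst (s i)) (snd (s i))
              / (1 - Q (fst (s i))))
      = (\<Sum>i<n. of_bool (Q (fst (s i)) = q \<and> snd (s i)) :: real)"
    using assms by (intro sum.cong) (auto simp: miscalibration_outcome_def)
  also have "\<dots> = real (card {i\<in>{..<n}. Q (fst (s i)) = q \<and> snd (s i)})"
    by (simp add: of_bool_def sum.If_cases Int_def conj_commute)
  finally show ?thesis
    by (simp add: iptw_def)
qed

lemma miscalibration_outcome_effect:
  "(\<lambda>(x, t). miscalibration_outcome Q q x True - miscalibration_outcome Q q x False)
     = (\<lambda>z. q * indicator {(x, t). Q x = q} z)"
  by (auto simp: miscalibration_outcome_def fun_eq_iff indicator_def)

lemma ate_miscalibration_outcome:
  "ate P (miscalibration_outcome Q q) = q * measure_pmf.prob P {(x, t). Q x = q}"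
  by (simp add: ate_def miscalibration_outcome_effect)

lemma integrable_miscalibration_outcome_effect:
  "integrable (measure_pmf P)
     (\<lambda>(x, t). miscalibration_outcome Q q x True - miscalibration_outcome Q q x False)"
  unfolding miscalibration_outcome_effect
  by (intro integrable_mult_right measure_pmf.integrable_const_bound[where B = 1])
     (auto simp: indicator_def)

theorem mainTheorem1:
  fixes P :: "('a :: countable \<times> bool) pmf" and Q :: "'a \<Rightarrow> real"
  assumes Q_range: "\<And>x. 0 < Q x \<and> Q x < 1"
    and not_calibrated: "\<exists>q'. 0 < q' \<and> q' < 1
        \<and> measure_pmf.prob P {(x, t). Q x = q'} > 0
        \<and> measure_pmf.prob P {(x, t). Q x = q' \<and> t} / measure_pmf.prob P {(x, t). Q x = q'} \<noteq> q'"
  shows "\<exists>g :: 'a \<Rightarrow> bool \<Rightarrow> real.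
           integrable (measure_pmf P) (\<lambda>(x, t). g x True - g x False)
         \<and> (\<lambda>n. measure_pmf.prob (Pi_pmf {..<n} undefined (\<lambda>_. P))
                   {s. iptw Q g n s = ate P g}) \<longlonglongrightarrow> 0"
proof -
  obtain q where q: "0 < q" and level_pos: "measure_pmf.prob P {(x, t). Q x = q} > 0"
    and miscalibrated: "measure_pmf.prob P {(x, t). Q x = q \<and> t}
                          / measure_pmf.prob P {(x, t). Q x = q} \<noteq> q"
    using not_calibrated by blast
  have "q \<noteq> 0"
    using q by simp
  let ?E = "\<lambda>z. Q (fst z) = q \<and> snd z"
  have "q * measure_pmf.prob P {(x, t). Q x = q} \<noteq> measure_pmf.prob P {z. ?E z}"
    using miscalibrated level_pos by (auto simp: field_simps case_prod_unfold)
  then have "(\<lambda>n. measure_pmf.prob (Pi_pmf {..<n} undefined (\<lambda>_. P))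
      {s. iptw Q (miscalibration_outcome Q q) n s = ate P (miscalibration_outcome Q q)}) \<longlonglongrightarrow> 0"
    unfolding iptw_miscalibration_outcome[OF \<open>q \<noteq> 0\<close>] ate_miscalibration_outcome
    by (rule empirical_frequency_eq_tendsto_0)
  then show ?thesis
    using integrable_miscalibration_outcome_effect by blast
qed

end
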